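(* Let $h:(a,b)\to\mathbb{R}$ and $g:(c,d)\to\mathbb{R}$ be real analytic (not identically zero), where $(c,d)$ contains the image of $h$ and each interval is bounded or unbounded. Assume that the function \[x\mapsto\frac{\kappa(h,x)+\kappa(g,h(x))}{1+\kappa(g\circ h,x)},\qquad\text{with the rule }\tfrac{\infty}{\infty}=1,\] is bounded on $(a,b)$. Then $g$ and $h$ are compatible.
   Context: For a real analytic function $f$ on an open interval, not identically zero, the condition number is $\kappa(f,x)=0$ if $x=0$, $\kappa(f,x)=\infty$ if $x\neq0$ and $f(x)=0$, and $\kappa(f,x)=|x|\,|f'(x)|/|f(x)|$ otherwise; set $\mu(f,x)=1+\kappa(f,x)$. Two such functions $h:(a,b)\to\mathbb{R}$, $g:(c,d)\to\mathbb{R}$ with $h((a,b))\subseteq(c,d)$ are called compatible if there is a constant $C>0$ such that $\mu(g,h(x))\,\mu(h,x)\leq C\,\mu(g\circ h,x)$ for all $x\in(a,b)$ (with the rule $\infty/\infty=1$ when this is read as boundedness of the ratio). *)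

theory Defs
  imports "HOL-Analysis.Analysis" "HOL-Library.Extended_Real"
begin

definition oint :: "ereal \<Rightarrow> ereal \<Rightarrow> real set" where
  "oint a b = {x. a < ereal x \<and> ereal x < b}"

definition real_analytic_on :: "(real \<Rightarrow> real) \<Rightarrow> real set \<Rightarrow> bool" where
  "real_analytic_on f S \<longleftrightarrow>
     (\<forall>x0\<in>S. \<exists>r>0. \<exists>c::nat \<Rightarrow> real.
        \<forall>y. \<bar>y - x0\<bar> < r \<longrightarrow> (\<lambda>n. c n * (y - x0) ^ n) sums f y)"

definition kappa :: "(real \<Rightarrow> real) \<Rightarrow> real \<Rightarrow> ereal" where
  "kappa f x = (if x = 0 then 0
                else if f x = 0 then \<infinity>
                else ereal (\<bar>x\<bar> * \<bar>deriv f x\<bar> / \<bar>f x\<bar>))"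

definition mu :: "(real \<Rightarrow> real) \<Rightarrow> real \<Rightarrow> ereal" where
  "mu f x = 1 + kappa f x"

definition compatible :: "(real \<Rightarrow> real) \<Rightarrow> real set \<Rightarrow> (real \<Rightarrow> real) \<Rightarrow> bool" where
  "compatible h I g \<longleftrightarrow>
     (\<exists>C::real. C > 0 \<and> (\<forall>x\<in>I. mu g (h x) * mu h x \<le> ereal C * mu (g \<circ> h) x))"

definition ediv1 :: "ereal \<Rightarrow> ereal \<Rightarrow> ereal" where
  "ediv1 p q = (if p = \<infinity> \<and> q = \<infinity> then 1 else p / q)"

end

theory Submission
  imports Defs
begin

text \<open>Where h, g and g \<circ> h are regular and nonvanishing, the chain rule makes condition numbers
  multiplicative, so that
  \<mu>(g, h x) \<mu>(h, x) = (1 + \<kappa>(g, h x))(1 + \<kappa>(h, x)) = \<mu>(g \<circ> h, x) + \<kappa>(h, x) + \<kappa>(g, h x);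
  at the remaining points (x = 0, or some condition number infinite) the left-hand side is
  still at most the right-hand side. The hypothesis bounds \<kappa>(h, x) + \<kappa>(g, h x) by
  B \<mu>(g \<circ> h, x), whence \<mu>(g, h x) \<mu>(h, x) \<le> (1 + B) \<mu>(g \<circ> h, x).
  Analyticity enters only through differentiability.\<close>

lemma real_analytic_on_imp_field_differentiable:
  assumes "real_analytic_on f S" "x0 \<in> S"
  shows "f field_differentiable at x0"
proof -
  obtain r c where "r > 0"
    and f_sums: "\<And>y. \<bar>y - x0\<bar> < r \<Longrightarrow> (\<lambda>n. c n * (y - x0) ^ n) sums f y"
    using assms unfolding real_analytic_on_def by blast
  define F where "F = (\<lambda>t::real. \<Sum>n. c n * t ^ n)"
  have f_eq: "f y = F (y - x0)" if "y \<in> ball x0 r" for y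
    using f_sums[of y] that by (simp add: F_def dist_real_def sums_iff abs_minus_commute)
  have "summable (\<lambda>n. c n * t ^ n)" if "norm t < r" for t :: real
    using f_sums[of "t + x0"] that by (simp add: sums_iff)
  then have "(F has_field_derivative (\<Sum>n. diffs c n * 0 ^ n)) (at 0)"
    unfolding F_def by (rule termdiffs_strong') (use \<open>r > 0\<close> in auto)
  then obtain D where "(F has_field_derivative D) (at (x0 - x0))"
    by auto
  moreover have "((\<lambda>y. y - x0) has_field_derivative 1) (at x0)"
    by (auto intro!: derivative_eq_intros)
  ultimately have "((\<lambda>y. F (y - x0)) has_field_derivative D * 1) (at x0)"
    by (rule DERIV_chain2[where g = "\<lambda>y. y - x0" and x = x0])
  then have "(f has_field_derivative D * 1) (at x0)"
    by (rule has_field_derivative_transform_within_open[of _ _ _ "ball x0 r"])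
       (use \<open>r > 0\<close> f_eq in auto)
  then show ?thesis
    by (auto simp: field_differentiable_def)
qed

lemma kappa_nonneg: "0 \<le> kappa f x"
  by (simp add: kappa_def)

lemma kappa_comp:
  assumes "f field_differentiable at x" "g field_differentiable at (f x)"
    and "x \<noteq> 0" "f x \<noteq> 0" "g (f x) \<noteq> 0"
  shows "kappa (g \<circ> f) x = kappa g (f x) * kappa f x"
  using assms by (simp add: kappa_def deriv_chain abs_mult)

lemma mu_comp_le_mu_plus_kappa:
  assumes "f field_differentiable at x" "g field_differentiable at (f x)"
  shows "mu g (f x) * mu f x \<le> mu (g \<circ> f) x + (kappa f x + kappa g (f x))"
proof (cases "x = 0 \<or> f x = 0 \<or> g (f x) = 0")
  case True
  then consider "x = 0" | "x \<noteq> 0" "kappa (g \<circ> f) x = \<infinity>" | "kappa f x = \<infinity>" "kappa g (f x) = 0"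
    by (cases "x = 0"; cases "g (f x) = 0") (auto simp: kappa_def)
  then show ?thesis
    by cases (auto simp: mu_def kappa_def)
next
  case False
  then obtain p q where "kappa f x = ereal p" "kappa g (f x) = ereal q" "p \<ge> 0" "q \<ge> 0"
    by (simp add: kappa_def)
  with False assms show ?thesis
    by (simp add: mu_def kappa_comp algebra_simps)
qed

lemma ediv1_le_imp_le_mult:
  assumes "0 \<le> p" "0 < q" "0 < B" "ediv1 p q \<le> ereal B"
  shows "p \<le> ereal B * q"
  using assms by (cases p; cases q) (auto simp: ediv1_def field_simps split: if_splits)

theorem proposition5:
  fixes h g :: "real \<Rightarrow> real" and a b c d :: ereal
  assumes "a < b" and "c < d"
    and "real_analytic_on h (oint a b)" and "\<exists>x\<in>oint a b. h x \<noteq> 0"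
    and "real_analytic_on g (oint c d)" and "\<exists>y\<in>oint c d. g y \<noteq> 0"
    and "h ` oint a b \<subseteq> oint c d"
    and "\<exists>B::real. \<forall>x\<in>oint a b.
           ediv1 (kappa h x + kappa g (h x)) (1 + kappa (g \<circ> h) x) \<le> ereal B"
  shows "compatible h (oint a b) g"
proof -
  obtain B :: real where "1 \<le> B" and bound: "\<And>x. x \<in> oint a b \<Longrightarrow>
      ediv1 (kappa h x + kappa g (h x)) (1 + kappa (g \<circ> h) x) \<le> ereal B"
    using assms(8) by (metis max.cobounded1 max.cobounded2 ereal_less_eq(3) order_trans)
  have "mu g (h x) * mu h x \<le> ereal (1 + B) * mu (g \<circ> h) x" if x: "x \<in> oint a b" for x
  proof -
    have "h field_differentiable at x" "g field_differentiable at (h x)"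
      using x assms(3,5,7) by (auto intro: real_analytic_on_imp_field_differentiable)
    then have "mu g (h x) * mu h x \<le> mu (g \<circ> h) x + (kappa h x + kappa g (h x))"
      by (rule mu_comp_le_mu_plus_kappa)
    also have "\<dots> \<le> mu (g \<circ> h) x + ereal B * mu (g \<circ> h) x"
      using bound[OF x] \<open>1 \<le> B\<close> kappa_nonneg[of h x] kappa_nonneg[of g "h x"]
        kappa_nonneg[of "g \<circ> h" x]
      by (intro add_left_mono ediv1_le_imp_le_mult) (auto simp: mu_def intro: add_pos_nonneg)
    also have "\<dots> = ereal (1 + B) * mu (g \<circ> h) x"
      using \<open>1 \<le> B\<close> ereal_left_distrib[of 1 "ereal B" "mu (g \<circ> h) x"]
      by (simp add: add.commute)
    finally show ?thesis .
  qed
  moreover have "0 < 1 + B"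
    using \<open>1 \<le> B\<close> by simp
  ultimately show ?thesis
    unfolding compatible_def by blast
qed

end
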